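(* Let $(M,\widetilde B)$ be a root of unity quantum seed and $\mathrm{inv}\subseteq[1,N]\setminus\mathrm{ex}$. Then the root of unity quantum cluster algebra $\mathcal A_\varepsilon(M,\widetilde B,\mathrm{inv})$ and the root of unity upper quantum cluster algebra $\mathcal U_\varepsilon(M,\widetilde B,\mathrm{inv})$ are both polynomial identity (PI) domains.
   Context: Let $\ell$ be a positive integer, $\mathbb Z_\ell=\mathbb Z/\ell\mathbb Z$, $\varepsilon^{1/2}\in\mathbb C$ a primitive $\ell$-th root of unity, $\varepsilon=(\varepsilon^{1/2})^2$, and $\mathcal A^{1/2}_\varepsilon=\mathbb Z[\varepsilon^{1/2}]$. For $a\in\mathbb Z_\ell$ put $\varepsilon^{a/2}=(\varepsilon^{1/2})^a$. For an integer matrix $C$, $\overline C$ denotes its reduction mod $\ell$; $e_1,\dots,e_N$ is the standard basis of $\mathbb Z^N$. For a skew-symmetric bilinear form $\Lambda:\mathbb Z^N\times\mathbb Z^N\to\mathbb Z_\ell$ (identified with its matrix $(\lambda_{ij})=(\Lambda(e_i,e_j))$), $\mathcal T_\varepsilon(\Lambda)$ is the $\mathcal A^{1/2}_\varepsilon$-algebra with basis $\{X^f\}_{f\in\mathbb Z^N}$ and product $X^fX^g=\varepsilon^{\Lambda(f,g)/2}X^{f+g}$. A root of unity toric frame of a division algebra $\mathcal F$ over $\mathbb Q(\varepsilon^{1/2})$ is a map $M:\mathbb Z^N\to\mathcal F$ for which there are a skew-symmetric $\Lambda$ (necessarily unique; denoted $\Lambda_M$) and an injective $\mathcal A^{1/2}_\varepsilon$-algebra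 homomorphism $\phi:\mathcal T_\varepsilon(\Lambda)\to\mathcal F$ with $\phi(X^f)=M(f)$ for all $f$ and with $\mathcal F$ the skew field of fractions of $\phi(\mathcal T_\varepsilon(\Lambda))$. Fix $\mathrm{ex}\subseteq[1,N]$. An exchange matrix $\widetilde B=(b_{ij})$ is an integer matrix with rows indexed by $[1,N]$ and columns by $\mathrm{ex}$; its principal part $B$ is the $\mathrm{ex}\times\mathrm{ex}$ submatrix, and $b^k\in\mathbb Z^N$ is its $k$-th column. $(\Lambda,\widetilde B)$ is $\ell$-compatible if there is $D=\mathrm{diag}(d_j)_{j\in\mathrm{ex}}$ with positive integer entries such that $DB$ is skew-symmetric and $\sum_{k=1}^N\overline b_{kj}\lambda_{ki}=\delta_{ij}\overline d_j$ in $\mathbb Z_\ell$ for all $i\in[1,N]$, $j\in\mathrm{ex}$. A root of unity quantum seed is a pair $(M,\widetilde B)$ with $M$ a root of unity toric frame and $(\Lambda_M,\widetilde B)$ $\ell$-compatible. For $b\in\mathbb Z^N$, $[b]_+$ (resp. $[b]_-$) is obtained from $b$ by replacing its negative (resp. positive) entries by $0$. Mutation in direction $k\in\mathrm{ex}$: $\mu_k(\widetilde B)=(b'_{ij})$ with $b'_{ij}=-b_{ij}$ if $i=k$ or $j=k$, and $b'_{ij}=b_{ij}+(|b_{ik}|b_{kj}+b_{ik}|b_{kj}|)/2$ otherwise; $\mu_k(M)$ is the root of unity toric frame with matrix $\overline E^\top\Lambda_M\overline E$ (where $E\in M_N(\mathbb Z)$ has $e_{ij}=\delta_{ij}$ for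 $j\ne k$, $e_{kk}=-1$, $e_{ik}=\max(0,-b_{ik})$ for $i\neq k$) and $\mu_k(M)(e_j)=M(e_j)$ for $j\neq k$, $\mu_k(M)(e_k)=M(-e_k+[b^k]_+)+M(-e_k-[b^k]_-)$; $\mu_k(M,\widetilde B)=(\mu_k(M),\mu_k(\widetilde B))$ is again a root of unity quantum seed. Seeds related by finite sequences of mutations are mutation-equivalent. The cluster variables of a seed $(M',\widetilde B')$ are $M'(e_i)$, $i\in[1,N]$; those with $i\notin\mathrm{ex}$ (frozen) are common to all mutation-equivalent seeds. For $\mathrm{inv}\subseteq[1,N]\setminus\mathrm{ex}$, $\mathcal A_\varepsilon(M,\widetilde B,\mathrm{inv})$ is the $\mathcal A^{1/2}_\varepsilon$-subalgebra of $\mathcal F$ generated by all cluster variables of all seeds mutation-equivalent to $(M,\widetilde B)$ and by $M(e_j)^{-1}$, $j\in\mathrm{inv}$; $\mathcal U_\varepsilon(M,\widetilde B,\mathrm{inv})$ is the intersection over all seeds $(M',\widetilde B')$ mutation-equivalent to $(M,\widetilde B)$ of the subalgebras $\mathcal A^{1/2}_\varepsilon\langle M'(e_i),M'(e_j)^{-1}: i\in[1,N],\ j\in\mathrm{ex}\sqcup\mathrm{inv}\rangle$ of $\mathcal F$. *)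

theory Defs
  imports Complex_Main "HOL-Computational_Algebra.Polynomial"
begin

definition primitive_root :: "nat \<Rightarrow> complex \<Rightarrow> bool" where
  "primitive_root l z \<longleftrightarrow> 0 < l \<and> z ^ l = 1 \<and> (\<forall>k. 0 < k \<and> k < l \<longrightarrow> z ^ k \<noteq> 1)"

definition Kfield :: "complex \<Rightarrow> complex set" where
  "Kfield z = \<Inter>{S. z \<in> S \<and> 0 \<in> S \<and> 1 \<in> S \<and>
      (\<forall>a\<in>S. \<forall>b\<in>S. a + b \<in> S \<and> a - b \<in> S \<and> a * b \<in> S) \<and>
      (\<forall>a\<in>S. inverse a \<in> S)}"

definition Aring :: "complex \<Rightarrow> complex set" where
  "Aring z = {poly (map_poly of_int p) z | p :: int poly. True}"

definition division_algebra_over :: "complex \<Rightarrow> (complex \<Rightarrow> 'f::division_ring) \<Rightarrow> bool" where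
  "division_algebra_over z emb \<longleftrightarrow> emb 1 = 1 \<and>
     (\<forall>a\<in>Kfield z. \<forall>b\<in>Kfield z. emb (a + b) = emb a + emb b \<and> emb (a * b) = emb a * emb b) \<and>
     (\<forall>a\<in>Kfield z. \<forall>x. emb a * x = x * emb a)"

definition ZN :: "nat \<Rightarrow> (nat \<Rightarrow> int) set" where
  "ZN N = {f. \<forall>i. f i \<noteq> 0 \<longrightarrow> i \<in> {1..N}}"

definition ev :: "nat \<Rightarrow> nat \<Rightarrow> int" where
  "ev i = (\<lambda>j. if j = i then 1 else 0)"

definition bil :: "nat \<Rightarrow> (nat \<Rightarrow> nat \<Rightarrow> int) \<Rightarrow> (nat \<Rightarrow> int) \<Rightarrow> (nat \<Rightarrow> int) \<Rightarrow> int" where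
  "bil N lam f g = (\<Sum>i\<in>{1..N}. \<Sum>j\<in>{1..N}. f i * lam i j * g j)"

text \<open>epsh l z a = (z)^(a mod l), i.e. eps^(a/2) for a in Z_l.\<close>
definition epsh :: "nat \<Rightarrow> complex \<Rightarrow> int \<Rightarrow> complex" where
  "epsh l z a = z ^ nat (a mod int l)"

text \<open>Skew-symmetric matrix over Z_l (entries represented by integers).\<close>
definition skew_mod :: "nat \<Rightarrow> nat \<Rightarrow> (nat \<Rightarrow> nat \<Rightarrow> int) \<Rightarrow> bool" where
  "skew_mod l N lam \<longleftrightarrow> (\<forall>i\<in>{1..N}. \<forall>j\<in>{1..N}. (lam i j + lam j i) mod int l = 0)"

text \<open>Elements: finitely supported A-valued coefficient functions on Z^N.\<close>
definition Tset :: "complex \<Rightarrow> nat \<Rightarrow> ((nat \<Rightarrow> int) \<Rightarrow> complex) set" where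
  "Tset z N = {c. finite {f. c f \<noteq> 0} \<and> (\<forall>f. c f \<noteq> 0 \<longrightarrow> f \<in> ZN N) \<and> (\<forall>f. c f \<in> Aring z)}"

definition Xb :: "(nat \<Rightarrow> int) \<Rightarrow> (nat \<Rightarrow> int) \<Rightarrow> complex" where
  "Xb f = (\<lambda>g. if g = f then 1 else 0)"

definition tadd :: "((nat \<Rightarrow> int) \<Rightarrow> complex) \<Rightarrow> ((nat \<Rightarrow> int) \<Rightarrow> complex) \<Rightarrow> (nat \<Rightarrow> int) \<Rightarrow> complex" where
  "tadd c d = (\<lambda>f. c f + d f)"

definition tscal :: "complex \<Rightarrow> ((nat \<Rightarrow> int) \<Rightarrow> complex) \<Rightarrow> (nat \<Rightarrow> int) \<Rightarrow> complex" where
  "tscal a c = (\<lambda>f. a * c f)"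

text \<open>Twisted product: X^f X^g = eps^(Lambda(f,g)/2) X^(f+g), extended bilinearly.\<close>
definition tmul :: "nat \<Rightarrow> complex \<Rightarrow> nat \<Rightarrow> (nat \<Rightarrow> nat \<Rightarrow> int) \<Rightarrow>
    ((nat \<Rightarrow> int) \<Rightarrow> complex) \<Rightarrow> ((nat \<Rightarrow> int) \<Rightarrow> complex) \<Rightarrow> (nat \<Rightarrow> int) \<Rightarrow> complex" where
  "tmul l z N lam c d = (\<lambda>h. \<Sum>f\<in>{f. c f \<noteq> 0}.
      c f * d (\<lambda>i. h i - f i) * epsh l z (bil N lam f (\<lambda>i. h i - f i)))"

definition divsub :: "'f::division_ring set \<Rightarrow> 'f set" where
  "divsub S = \<Inter>{D. S \<subseteq> D \<and> 0 \<in> D \<and> 1 \<in> D \<and>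
      (\<forall>a\<in>D. \<forall>b\<in>D. a + b \<in> D \<and> a - b \<in> D \<and> a * b \<in> D) \<and> (\<forall>a\<in>D. inverse a \<in> D)}"

definition toric_frame_with :: "nat \<Rightarrow> complex \<Rightarrow> (complex \<Rightarrow> 'f::division_ring) \<Rightarrow> nat \<Rightarrow>
    (nat \<Rightarrow> nat \<Rightarrow> int) \<Rightarrow> ((nat \<Rightarrow> int) \<Rightarrow> 'f) \<Rightarrow> bool" where
  "toric_frame_with l z emb N lam M \<longleftrightarrow> skew_mod l N lam \<and>
     (\<exists>\<phi>. (\<forall>c\<in>Tset z N. \<forall>d\<in>Tset z N. \<phi> (tadd c d) = \<phi> c + \<phi> d) \<and>
          (\<forall>c\<in>Tset z N. \<forall>d\<in>Tset z N. \<phi> (tmul l z N lam c d) = \<phi> c * \<phi> d) \<and>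
          (\<forall>a\<in>Aring z. \<forall>c\<in>Tset z N. \<phi> (tscal a c) = emb a * \<phi> c) \<and>
          \<phi> (Xb (\<lambda>_. 0)) = 1 \<and>
          inj_on \<phi> (Tset z N) \<and>
          (\<forall>f\<in>ZN N. \<phi> (Xb f) = M f) \<and>
          divsub (\<phi> ` Tset z N) = UNIV)"

definition toric_frame :: "nat \<Rightarrow> complex \<Rightarrow> (complex \<Rightarrow> 'f::division_ring) \<Rightarrow> nat \<Rightarrow>
    ((nat \<Rightarrow> int) \<Rightarrow> 'f) \<Rightarrow> bool" where
  "toric_frame l z emb N M \<longleftrightarrow> (\<exists>lam. toric_frame_with l z emb N lam M)"

definition compatible :: "nat \<Rightarrow> nat \<Rightarrow> nat set \<Rightarrow> (nat \<Rightarrow> nat \<Rightarrow> int) \<Rightarrow> (nat \<Rightarrow> nat \<Rightarrow> int) \<Rightarrow> bool" where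
  "compatible l N ex lam B \<longleftrightarrow> (\<exists>d :: nat \<Rightarrow> int.
      (\<forall>j\<in>ex. 0 < d j) \<and>
      (\<forall>i\<in>ex. \<forall>j\<in>ex. d i * B i j = - (d j * B j i)) \<and>
      (\<forall>i\<in>{1..N}. \<forall>j\<in>ex. (\<Sum>k\<in>{1..N}. B k j * lam k i) mod int l
                             = (if i = j then d j mod int l else 0)))"

definition quantum_seed :: "nat \<Rightarrow> complex \<Rightarrow> (complex \<Rightarrow> 'f::division_ring) \<Rightarrow> nat \<Rightarrow> nat set \<Rightarrow>
    ((nat \<Rightarrow> int) \<Rightarrow> 'f) \<Rightarrow> (nat \<Rightarrow> nat \<Rightarrow> int) \<Rightarrow> bool" where
  "quantum_seed l z emb N ex M B \<longleftrightarrow>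
     (\<exists>lam. toric_frame_with l z emb N lam M \<and> compatible l N ex lam B)"

definition mutB :: "nat \<Rightarrow> (nat \<Rightarrow> nat \<Rightarrow> int) \<Rightarrow> nat \<Rightarrow> nat \<Rightarrow> int" where
  "mutB k B = (\<lambda>i j. if i = k \<or> j = k then - B i j
                     else B i j + (\<bar>B i k\<bar> * B k j + B i k * \<bar>B k j\<bar>) div 2)"

definition Emat :: "(nat \<Rightarrow> nat \<Rightarrow> int) \<Rightarrow> nat \<Rightarrow> nat \<Rightarrow> nat \<Rightarrow> int" where
  "Emat B k = (\<lambda>p q. if q \<noteq> k then (if p = q then 1 else 0)
                     else if p = k then -1 else max 0 (- B p k))"

definition mutLam :: "nat \<Rightarrow> (nat \<Rightarrow> nat \<Rightarrow> int) \<Rightarrow> nat \<Rightarrow> (nat \<Rightarrow> nat \<Rightarrow> int) \<Rightarrow> nat \<Rightarrow> nat \<Rightarrow> int" where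
  "mutLam N B k lam = (\<lambda>i j. \<Sum>p\<in>{1..N}. \<Sum>q\<in>{1..N}. Emat B k p i * lam p q * Emat B k q j)"

definition bcol :: "nat \<Rightarrow> (nat \<Rightarrow> nat \<Rightarrow> int) \<Rightarrow> nat \<Rightarrow> nat \<Rightarrow> int" where
  "bcol N B k = (\<lambda>i. if i \<in> {1..N} then B i k else 0)"

definition vpos :: "(nat \<Rightarrow> int) \<Rightarrow> nat \<Rightarrow> int" where
  "vpos v = (\<lambda>i. max 0 (v i))"

definition vneg :: "(nat \<Rightarrow> int) \<Rightarrow> nat \<Rightarrow> int" where
  "vneg v = (\<lambda>i. min 0 (v i))"

text \<open>Mutation of a seed in direction k (relational: mu_k(M) is the toric frame with
  matrix E^T Lambda_M E and the prescribed values on the basis vectors).\<close>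
definition mut_rel :: "nat \<Rightarrow> complex \<Rightarrow> (complex \<Rightarrow> 'f::division_ring) \<Rightarrow> nat \<Rightarrow> nat set \<Rightarrow> nat \<Rightarrow>
    ((nat \<Rightarrow> int) \<Rightarrow> 'f) \<times> (nat \<Rightarrow> nat \<Rightarrow> int) \<Rightarrow>
    ((nat \<Rightarrow> int) \<Rightarrow> 'f) \<times> (nat \<Rightarrow> nat \<Rightarrow> int) \<Rightarrow> bool" where
  "mut_rel l z emb N ex k s s' \<longleftrightarrow> (case s of (M, B) \<Rightarrow> case s' of (M', B') \<Rightarrow>
     k \<in> ex \<and> B' = mutB k B \<and>
     (\<exists>lam. toric_frame_with l z emb N lam M \<and> toric_frame_with l z emb N (mutLam N B k lam) M') \<and>
     (\<forall>j\<in>{1..N}. j \<noteq> k \<longrightarrow> M' (ev j) = M (ev j)) \<and>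
     M' (ev k) = M (\<lambda>i. - ev k i + vpos (bcol N B k) i) + M (\<lambda>i. - ev k i - vneg (bcol N B k) i))"

definition mut_equiv :: "nat \<Rightarrow> complex \<Rightarrow> (complex \<Rightarrow> 'f::division_ring) \<Rightarrow> nat \<Rightarrow> nat set \<Rightarrow>
    ((nat \<Rightarrow> int) \<Rightarrow> 'f) \<times> (nat \<Rightarrow> nat \<Rightarrow> int) \<Rightarrow>
    ((nat \<Rightarrow> int) \<Rightarrow> 'f) \<times> (nat \<Rightarrow> nat \<Rightarrow> int) \<Rightarrow> bool" where
  "mut_equiv l z emb N ex = (\<lambda>s s'. \<exists>k. mut_rel l z emb N ex k s s')\<^sup>*\<^sup>*"

definition gen_alg :: "complex \<Rightarrow> (complex \<Rightarrow> 'f::division_ring) \<Rightarrow> 'f set \<Rightarrow> 'f set" where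
  "gen_alg z emb S = \<Inter>{R. (\<forall>a\<in>Aring z. emb a \<in> R) \<and> S \<subseteq> R \<and>
      (\<forall>a\<in>R. \<forall>b\<in>R. a + b \<in> R \<and> a * b \<in> R \<and> - a \<in> R)}"

definition cluster_alg :: "nat \<Rightarrow> complex \<Rightarrow> (complex \<Rightarrow> 'f::division_ring) \<Rightarrow> nat \<Rightarrow> nat set \<Rightarrow>
    ((nat \<Rightarrow> int) \<Rightarrow> 'f) \<Rightarrow> (nat \<Rightarrow> nat \<Rightarrow> int) \<Rightarrow> nat set \<Rightarrow> 'f set" where
  "cluster_alg l z emb N ex M B invs = gen_alg z emb
     ({M' (ev i) | M' B' i. mut_equiv l z emb N ex (M, B) (M', B') \<and> i \<in> {1..N}}
      \<union> {inverse (M (ev j)) | j. j \<in> invs})"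

definition upper_cluster_alg :: "nat \<Rightarrow> complex \<Rightarrow> (complex \<Rightarrow> 'f::division_ring) \<Rightarrow> nat \<Rightarrow> nat set \<Rightarrow>
    ((nat \<Rightarrow> int) \<Rightarrow> 'f) \<Rightarrow> (nat \<Rightarrow> nat \<Rightarrow> int) \<Rightarrow> nat set \<Rightarrow> 'f set" where
  "upper_cluster_alg l z emb N ex M B invs =
     \<Inter>{gen_alg z emb ({M' (ev i) | i. i \<in> {1..N}} \<union> {inverse (M' (ev j)) | j. j \<in> ex \<union> invs})
        | M' B'. mut_equiv l z emb N ex (M, B) (M', B')}"

text \<open>Noncommutative polynomials with integer coefficients: finitely supported maps from
  words (lists of variable indices) to integers; evaluation at r.\<close>
definition nc_eval :: "(nat list \<Rightarrow> int) \<Rightarrow> (nat \<Rightarrow> 'f::ring_1) \<Rightarrow> 'f" where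
  "nc_eval p r = (\<Sum>w\<in>{w. p w \<noteq> 0}. of_int (p w) * prod_list (map r w))"

text \<open>PI ring: satisfies a monic polynomial identity (some monomial has coefficient 1).\<close>
definition PI_ring :: "'f::ring_1 set \<Rightarrow> bool" where
  "PI_ring R \<longleftrightarrow> (\<exists>p :: nat list \<Rightarrow> int. finite {w. p w \<noteq> 0} \<and> (\<exists>w. p w = 1) \<and>
      (\<forall>r. (\<forall>i. r i \<in> R) \<longrightarrow> nc_eval p r = 0))"

definition domain_set :: "'f::ring_1 set \<Rightarrow> bool" where
  "domain_set R \<longleftrightarrow> 0 \<in> R \<and> 1 \<in> R \<and> (0::'f) \<noteq> 1 \<and>
     (\<forall>a\<in>R. \<forall>b\<in>R. a + b \<in> R \<and> - a \<in> R \<and> a * b \<in> R) \<and>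
     (\<forall>a\<in>R. \<forall>b\<in>R. a * b = 0 \<longrightarrow> a = 0 \<or> b = 0)"

definition PI_domain :: "'f::ring_1 set \<Rightarrow> bool" where
  "PI_domain R \<longleftrightarrow> PI_ring R \<and> domain_set R"

end

theory Submission
  imports Defs "HOL-Combinatorics.Permutations" "HOL-Library.FuncSet" "HOL-Library.Disjoint_Sets"
begin

(* Both algebras are subrings of the skew field F generated by the quantum torus, hence domains,
   and it suffices to show that F itself satisfies a polynomial identity. Since eps^(1/2) is an
   l-th root of unity, the monomials M (l q) are central, so F is spanned over its centre by the
   finitely many M u with 0 <= u i < l: this span contains the image of the torus, is closed under
   products, and, by a linear dependence among the powers of an element, under inverses, hence it
   is all of F. A ring spanned over its centre by d elements satisfies the standard identity
   s_(d+1), because s_(d+1) is multilinear over the centre and alternating. *)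

section \<open>Centre, central spans and subrings\<close>

definition center :: "'a::times set" where
  "center = {x. \<forall>y. x * y = y * x}"

lemma centerI: "(\<And>y. x * y = y * x) \<Longrightarrow> x \<in> center"
  and centerD: "x \<in> center \<Longrightarrow> x * y = y * x"
  by (simp_all add: center_def)

lemma center_0 [simp]: "(0::'a::mult_zero) \<in> center"
  by (simp add: center_def)

lemma center_1 [simp]: "(1::'a::monoid_mult) \<in> center"
  by (simp add: center_def)

lemma center_add: "x \<in> center \<Longrightarrow> y \<in> center \<Longrightarrow> (x + y :: 'a::semiring) \<in> center"
  by (simp add: center_def distrib_left distrib_right)

lemma center_uminus: "(x :: 'a::ring) \<in> center \<Longrightarrow> - x \<in> center"
  by (simp add: center_def)

lemma center_mult:
  assumes "(x :: 'a::semigroup_mult) \<in> center" "y \<in> center"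
  shows "x * y \<in> center"
proof (rule centerI)
  fix w
  have "x * y * w = x * (w * y)" by (metis assms(2) centerD mult.assoc)
  also have "\<dots> = w * (x * y)" by (metis assms(1) centerD mult.assoc)
  finally show "x * y * w = w * (x * y)" .
qed

lemma center_sum: "(\<And>i. i \<in> I \<Longrightarrow> f i \<in> center) \<Longrightarrow> (sum f I :: 'a::semiring_0) \<in> center"
  by (induction I rule: infinite_finite_induct) (auto intro: center_add)

lemma center_prod_list:
  "(\<And>x. x \<in> set xs \<Longrightarrow> c x \<in> center) \<Longrightarrow> (prod_list (map c xs) :: 'a::monoid_mult) \<in> center"
  by (induction xs) (auto intro: center_mult)

definition division_subring :: "'a::division_ring set \<Rightarrow> bool" where
  "division_subring D \<longleftrightarrow> 0 \<in> D \<and> 1 \<in> D \<and>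
     (\<forall>a\<in>D. \<forall>b\<in>D. a + b \<in> D \<and> a - b \<in> D \<and> a * b \<in> D) \<and> (\<forall>a\<in>D. inverse a \<in> D)"

lemma divsub_subset: "S \<subseteq> D \<Longrightarrow> division_subring D \<Longrightarrow> divsub S \<subseteq> D"
  unfolding divsub_def division_subring_def by blast

lemma division_subring_sum:
  "division_subring D \<Longrightarrow> (\<And>i. i \<in> I \<Longrightarrow> f i \<in> D) \<Longrightarrow> sum f I \<in> D"
  by (induction I rule: infinite_finite_induct) (auto simp: division_subring_def)

lemma division_subring_centralizer: "division_subring {y. x * y = y * (x :: 'a::division_ring)}"
proof -
  have "x * inverse a = inverse a * x" if "x * a = a * x" for a
  proof (cases "a = 0")
    case False
    have "x * inverse a = inverse a * (a * x) * inverse a"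
      using False by (simp add: mult.assoc[symmetric])
    also have "\<dots> = inverse a * (x * a) * inverse a" using that by simp
    also have "\<dots> = inverse a * x" using False by (simp add: mult.assoc)
    finally show ?thesis .
  qed simp
  moreover have "x * (a * b) = a * b * x" if "x * a = a * x" "x * b = b * x" for a b
    using that by (metis mult.assoc)
  ultimately show ?thesis
    unfolding division_subring_def by (simp add: algebra_simps)
qed

definition subring :: "'a::ring_1 set \<Rightarrow> bool" where
  "subring R \<longleftrightarrow> 1 \<in> R \<and> (\<forall>a\<in>R. \<forall>b\<in>R. a + b \<in> R \<and> - a \<in> R \<and> a * b \<in> R)"

lemma subring_Inter: "(\<And>R. R \<in> \<R> \<Longrightarrow> subring R) \<Longrightarrow> subring (\<Inter>\<R>)"
  unfolding subring_def by blast

lemma domain_set_if_subring: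
  fixes R :: "'a::division_ring set"
  assumes "subring R"
  shows "domain_set R"
proof -
  have "1 + - 1 \<in> R"
    using assms unfolding subring_def by blast
  then show ?thesis
    using assms unfolding subring_def domain_set_def by simp
qed

lemma center_inverse:
  assumes "(x :: 'a::division_ring) \<in> center"
  shows "inverse x \<in> center"
proof (rule centerI)
  fix y
  have "x \<in> {w. y * w = w * y}" using centerD[OF assms, of y] by simp
  then have "inverse x \<in> {w. y * w = w * y}"
    using division_subring_centralizer[of y] unfolding division_subring_def by blast
  then show "inverse x * y = y * inverse x" by simp
qed

definition central_span :: "'a::ring_1 set \<Rightarrow> 'a set" where
  "central_span B = {\<Sum>b\<in>B. c b * b | c. \<forall>b\<in>B. c b \<in> center}"

lemma central_spanI: "(\<And>b. b \<in> B \<Longrightarrow> c b \<in> center) \<Longrightarrow> (\<Sum>b\<in>B. c b * b) \<in> central_span B"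
  unfolding central_span_def by blast

lemma central_spanE:
  assumes "x \<in> central_span B"
  obtains c where "\<forall>b. c b \<in> center" "x = (\<Sum>b\<in>B. c b * b)"
proof -
  obtain c where c: "\<forall>b\<in>B. c b \<in> center" "x = (\<Sum>b\<in>B. c b * b)"
    using assms unfolding central_span_def by blast
  show ?thesis
    by (rule that[of "\<lambda>b. if b \<in> B then c b else 0"]) (use c in auto)
qed

lemma central_span_0: "0 \<in> central_span B"
  using central_spanI[of B "\<lambda>_. 0"] by simp

lemma central_span_empty: "central_span {} = {0}"
  unfolding central_span_def by auto

lemma central_span_add:
  assumes "x \<in> central_span B" "y \<in> central_span B"
  shows "x + y \<in> central_span B"
proof -
  obtain c where "\<forall>b. c b \<in> center" "x = (\<Sum>b\<in>B. c b * b)"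
    using assms(1) by (rule central_spanE)
  moreover obtain d where "\<forall>b. d b \<in> center" "y = (\<Sum>b\<in>B. d b * b)"
    using assms(2) by (rule central_spanE)
  ultimately show ?thesis
    using central_spanI[of B "\<lambda>b. c b + d b"]
    by (simp add: center_add distrib_right sum.distrib)
qed

lemma central_span_scale:
  assumes "k \<in> center" "x \<in> central_span B"
  shows "k * x \<in> central_span B"
proof -
  obtain c where "\<forall>b. c b \<in> center" "x = (\<Sum>b\<in>B. c b * b)"
    using assms(2) by (rule central_spanE)
  then show ?thesis
    using central_spanI[of B "\<lambda>b. k * c b"] assms(1)
    by (simp add: center_mult sum_distrib_left mult.assoc)
qed

lemma central_span_uminus: "x \<in> central_span B \<Longrightarrow> - x \<in> central_span B"
  using central_span_scale[of "-1" x B] center_uminus[OF center_1] by simp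

lemma central_span_diff: "x \<in> central_span B \<Longrightarrow> y \<in> central_span B \<Longrightarrow> x - y \<in> central_span B"
  using central_span_add[of x B "- y"] central_span_uminus[of y B] by simp

lemma central_span_sum:
  "(\<And>i. i \<in> I \<Longrightarrow> f i \<in> central_span B) \<Longrightarrow> sum f I \<in> central_span B"
  by (induction I rule: infinite_finite_induct) (auto intro: central_span_add central_span_0)

lemma central_span_base: "finite B \<Longrightarrow> b \<in> B \<Longrightarrow> b \<in> central_span B"
proof -
  have "(\<Sum>x\<in>B. (if x = b then 1 else 0) * x) = b" if "finite B" "b \<in> B"
  proof -
    have "(\<Sum>x\<in>B. (if x = b then 1 else 0) * x) = (\<Sum>x\<in>B. if x = b then b else 0)"
      by (intro sum.cong) auto
    then show ?thesis using that by simp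
  qed
  then show "finite B \<Longrightarrow> b \<in> B \<Longrightarrow> b \<in> central_span B"
    using central_spanI[of B "\<lambda>x. if x = b then 1 else 0"] by (metis center_0 center_1)
qed

lemma central_span_insertE:
  assumes "finite B" "b \<notin> B" "x \<in> central_span (insert b B)"
  obtains k w where "k \<in> center" "w \<in> central_span B" "x = k * b + w"
proof -
  obtain c where c: "\<forall>b. c b \<in> center" "x = (\<Sum>b\<in>insert b B. c b * b)"
    using assms(3) by (rule central_spanE)
  show ?thesis
    by (rule that[of "c b" "\<Sum>b\<in>B. c b * b"]) (use c assms(1,2) central_spanI in auto)
qed

lemma central_span_mult:
  assumes "\<And>b b'. b \<in> B \<Longrightarrow> b' \<in> B \<Longrightarrow> b * b' \<in> central_span B"
    and "x \<in> central_span B" "y \<in> central_span B"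
  shows "x * y \<in> central_span B"
proof -
  obtain c where c: "\<forall>b. c b \<in> center" "x = (\<Sum>b\<in>B. c b * b)"
    using assms(2) by (rule central_spanE)
  obtain d where d: "\<forall>b. d b \<in> center" "y = (\<Sum>b\<in>B. d b * b)"
    using assms(3) by (rule central_spanE)
  have "x * y = (\<Sum>b\<in>B. \<Sum>b'\<in>B. (c b * d b') * (b * b'))"
  proof -
    have "b * (d b' * b') = d b' * (b * b')" for b b'
      using centerD[of "d b'" b] d(1) by (simp add: mult.assoc[symmetric])
    then have "(c b * b) * (d b' * b') = (c b * d b') * (b * b')" for b b'
      by (metis mult.assoc)
    then show ?thesis
      unfolding c(2) d(2) sum_distrib_left sum_distrib_right by (subst sum.swap) simp
  qed
  also have "\<dots> \<in> central_span B"
    using assms(1) c(1) d(1) by (auto intro!: central_span_sum central_span_scale[OF center_mult])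
  finally show ?thesis .
qed

lemma central_dependence_after_elimination:
  fixes a :: "'i \<Rightarrow> 'a::division_ring"
  assumes I: "finite I" "j \<in> I" and t: "\<And>i. i \<in> I \<Longrightarrow> t i \<in> center"
    and k: "\<forall>i\<in>I - {j}. k i \<in> center" "\<exists>i\<in>I - {j}. k i \<noteq> 0"
      "(\<Sum>i\<in>I - {j}. k i * (a i - t i * a j)) = 0"
  shows "\<exists>k. (\<forall>i\<in>I. k i \<in> center) \<and> (\<exists>i\<in>I. k i \<noteq> 0) \<and> (\<Sum>i\<in>I. k i * a i) = 0"
proof (intro exI conjI)
  define s where "s = (\<Sum>i\<in>I - {j}. k i * t i)"
  have "(\<Sum>i\<in>I. (k(j := - s)) i * a i) = - s * a j + (\<Sum>i\<in>I - {j}. k i * a i)"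
    using I by (simp add: sum.remove)
  also have "(\<Sum>i\<in>I - {j}. k i * a i) = s * a j"
    using k(3) unfolding s_def
    by (simp add: right_diff_distrib sum_subtractf sum_distrib_right mult.assoc)
  finally show "(\<Sum>i\<in>I. (k(j := - s)) i * a i) = 0" by simp
  have "s \<in> center"
    unfolding s_def using k(1) t by (auto intro: center_sum center_mult)
  then show "\<forall>i\<in>I. (k(j := - s)) i \<in> center"
    using k(1) by (auto intro: center_uminus)
  show "\<exists>i\<in>I. (k(j := - s)) i \<noteq> 0"
    using k(2) by auto
qed

lemma central_span_dependent:
  fixes a :: "'i \<Rightarrow> 'a::division_ring"
  assumes "finite B" "finite I" "card B < card I" "\<And>i. i \<in> I \<Longrightarrow> a i \<in> central_span B"
  shows "\<exists>k. (\<forall>i\<in>I. k i \<in> center) \<and> (\<exists>i\<in>I. k i \<noteq> 0) \<and> (\<Sum>i\<in>I. k i * a i) = 0"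
  using assms
proof (induction B arbitrary: I a rule: finite_induct)
  case empty
  then show ?case
    using central_span_empty by (intro exI[of _ "\<lambda>_. 1"]) (auto simp: card_gt_0_iff intro!: sum.neutral)
next
  case (insert b B)
  have "\<forall>i\<in>I. \<exists>k w. k \<in> center \<and> w \<in> central_span B \<and> a i = k * b + w"
    using central_span_insertE[OF insert.hyps] insert.prems(3) by metis
  then obtain C W where CW: "\<And>i. i \<in> I \<Longrightarrow> C i \<in> center \<and> W i \<in> central_span B \<and> a i = C i * b + W i"
    by metis
  show ?case
  proof (cases "\<forall>i\<in>I. C i = 0")
    case True
    then show ?thesis
      using insert.IH[of I a] insert.prems insert.hyps CW by simp
  next
    case False
    then obtain j where j: "j \<in> I" "C j \<noteq> 0" by blast
    define t where "t i = C i * inverse (C j)" for i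
    have t: "t i \<in> center" if "i \<in> I" for i
      unfolding t_def using CW that j by (simp add: center_mult center_inverse)
    \<comment> \<open>subtracting t i * a j removes b from a i\<close>
    have "a i - t i * a j \<in> central_span B" if "i \<in> I - {j}" for i
    proof -
      have "t i * (C j * b) = C i * b"
        using j unfolding t_def by (simp add: mult.assoc[symmetric]) (simp add: mult.assoc)
      then have "a i - t i * a j = W i - t i * W j"
        using CW[of i] CW[of j] that j by (simp add: distrib_left)
      moreover have "W i - t i * W j \<in> central_span B"
        using CW[of i] CW[of j] t[of i] that j by (simp add: central_span_diff central_span_scale)
      ultimately show ?thesis by simp
    qed
    moreover have "card B < card (I - {j})"
      using insert.prems(1,2) insert.hyps j by simp
    ultimately obtain k where k: "\<forall>i\<in>I - {j}. k i \<in> center" "\<exists>i\<in>I - {j}. k i \<noteq> 0"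
      "(\<Sum>i\<in>I - {j}. k i * (a i - t i * a j)) = 0"
      using insert.IH[of "I - {j}" "\<lambda>i. a i - t i * a j"] insert.prems(1) by auto
    show ?thesis
      using central_dependence_after_elimination[OF insert.prems(1) j(1) t k] .
  qed
qed

text \<open>Dividing a central relation among the powers of x by the power of x in its lowest
  term leaves a relation with nonzero constant term.\<close>
lemma central_power_relation_lowest_term:
  fixes x :: "'a::division_ring"
  assumes x: "x \<noteq> 0" and k: "\<And>i. k i \<in> center" and "m \<le> d"
    and rel: "(\<Sum>i\<in>{m..d}. k i * x ^ i) = 0"
  shows "x * (\<Sum>i\<in>{Suc m..d}. k i * x ^ (i - Suc m)) = - k m"
proof -
  define y where "y = (\<Sum>i\<in>{Suc m..d}. k i * x ^ (i - Suc m))"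
  have "0 = k m * x ^ m + (\<Sum>i\<in>{Suc m..d}. k i * x ^ i)"
    using rel \<open>m \<le> d\<close> by (simp add: sum.atLeast_Suc_atMost)
  also have "(\<Sum>i\<in>{Suc m..d}. k i * x ^ i) = x ^ m * x * y"
    unfolding y_def sum_distrib_left
  proof (rule sum.cong)
    fix i assume i: "i \<in> {Suc m..d}"
    then have "x ^ i = x ^ m * x * x ^ (i - Suc m)"
      by (metis atLeastAtMost_iff le_add_diff_inverse power_Suc2 power_add)
    then show "k i * x ^ i = x ^ m * x * (k i * x ^ (i - Suc m))"
      using centerD[OF k, of i "x ^ m * x"] by (simp add: mult.assoc[symmetric])
  qed simp
  also have "k m * x ^ m = x ^ m * k m" using centerD[OF k] .
  finally have "x ^ m * (k m + x * y) = 0" by (simp add: distrib_left mult.assoc)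
  then show ?thesis
    using x unfolding y_def by (simp add: eq_neg_iff_add_eq_0 add.commute)
qed

lemma central_span_inverse:
  fixes B :: "'a::division_ring set"
  assumes B: "finite B" and one: "1 \<in> central_span B"
    and mult: "\<And>x y. x \<in> central_span B \<Longrightarrow> y \<in> central_span B \<Longrightarrow> x * y \<in> central_span B"
    and x: "x \<in> central_span B"
  shows "inverse x \<in> central_span B"
proof (cases "x = 0")
  case True
  then show ?thesis using central_span_0 by simp
next
  case False
  define d where "d = card B"
  have powers: "x ^ i \<in> central_span B" for i
    by (induction i) (simp_all add: one mult x)
  obtain k where k: "\<forall>i\<in>{0..d}. k i \<in> center" "\<exists>i\<in>{0..d}. k i \<noteq> 0"
    "(\<Sum>i\<in>{0..d}. k i * x ^ i) = 0"
    using central_span_dependent[OF B, of "{0..d}" "\<lambda>i. x ^ i"] powers unfolding d_def by auto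
  define k' where "k' i = (if i \<le> d then k i else 0)" for i
  have k': "k' i \<in> center" for i
    using k(1) unfolding k'_def by simp
  have "\<exists>i. i \<le> d \<and> k i \<noteq> 0" using k(2) by auto
  define m where "m = (LEAST i. i \<le> d \<and> k i \<noteq> 0)"
  have m: "m \<le> d" "k m \<noteq> 0"
    using LeastI_ex[OF \<open>\<exists>i. i \<le> d \<and> k i \<noteq> 0\<close>] unfolding m_def by auto
  have below_m: "k i = 0" if "i < m" for i
    using not_less_Least[of i "\<lambda>i. i \<le> d \<and> k i \<noteq> 0"] that m(1) unfolding m_def by auto
  have "(\<Sum>i\<in>{0..d}. k i * x ^ i) = (\<Sum>i\<in>{m..d}. k' i * x ^ i)"
    unfolding k'_def by (rule sum.mono_neutral_cong_right) (auto simp: below_m)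
  then have "(\<Sum>i\<in>{m..d}. k' i * x ^ i) = 0"
    using k(3) by simp
  from central_power_relation_lowest_term[OF False k' m(1) this]
  have xy: "x * y = - k m" if "y = (\<Sum>i\<in>{Suc m..d}. k' i * x ^ (i - Suc m))" for y
    using that m(1) unfolding k'_def by simp
  define y where "y = (\<Sum>i\<in>{Suc m..d}. k' i * x ^ (i - Suc m))"
  have km: "k m \<in> center" using k' m(1) unfolding k'_def by (metis)
  have "x * (- inverse (k m) * y) = - (inverse (k m) * (x * y))"
    using centerD[of "inverse (k m)" x] km by (simp add: center_inverse mult.assoc[symmetric])
  also have "\<dots> = 1" using xy[OF y_def] m(2) by simp
  finally have "inverse x = - inverse (k m) * y" by (rule inverse_unique)
  moreover have "y \<in> central_span B"
    unfolding y_def using k' powers by (intro central_span_sum central_span_scale) auto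
  ultimately show ?thesis
    using km by (simp add: central_span_scale central_span_uminus center_inverse)
qed

lemma division_subring_central_span:
  fixes B :: "'a::division_ring set"
  assumes "finite B" "1 \<in> central_span B"
    and "\<And>b b'. b \<in> B \<Longrightarrow> b' \<in> B \<Longrightarrow> b * b' \<in> central_span B"
  shows "division_subring (central_span B)"
  unfolding division_subring_def
  using assms(2) central_span_0 central_span_mult[OF assms(3)]
    central_span_inverse[OF assms(1,2) central_span_mult[OF assms(3)]]
  by (simp add: central_span_add central_span_diff)

lemma prod_list_map_sum:
  fixes F :: "'i \<Rightarrow> 'b \<Rightarrow> 'a::ring_1"
  assumes "distinct xs"
  shows "prod_list (map (\<lambda>x. \<Sum>b\<in>B. F x b) xs) =
    (\<Sum>g\<in>set xs \<rightarrow>\<^sub>E B. prod_list (map (\<lambda>x. F x (g x)) xs))"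
  using assms
proof (induction xs)
  case Nil
  then show ?case by simp
next
  case (Cons x xs)
  have x: "x \<notin> set xs" using Cons.prems by simp
  have "prod_list (map (\<lambda>x. \<Sum>b\<in>B. F x b) (x # xs)) =
      (\<Sum>b\<in>B. F x b) * (\<Sum>g\<in>set xs \<rightarrow>\<^sub>E B. prod_list (map (\<lambda>x. F x (g x)) xs))"
    using Cons by simp
  also have "\<dots> = (\<Sum>(b, g)\<in>B \<times> (set xs \<rightarrow>\<^sub>E B). F x b * prod_list (map (\<lambda>x. F x (g x)) xs))"
    by (subst sum_distrib_right, subst sum_distrib_left) (simp add: sum.cartesian_product)
  also have "\<dots> = (\<Sum>(b, g)\<in>B \<times> (set xs \<rightarrow>\<^sub>E B). prod_list (map (\<lambda>y. F y ((g(x := b)) y)) (x # xs)))"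
  proof (rule sum.cong, simp, clarify)
    fix b g
    have "map (\<lambda>y. F y ((g(x := b)) y)) xs = map (\<lambda>y. F y (g y)) xs"
      using x by (intro map_cong) auto
    then show "F x b * prod_list (map (\<lambda>x. F x (g x)) xs) =
        prod_list (map (\<lambda>y. F y ((g(x := b)) y)) (x # xs))"
      by (simp only: list.map prod_list.Cons fun_upd_same)
  qed
  also have "\<dots> = (\<Sum>g\<in>(\<lambda>(b, g). g(x := b)) ` (B \<times> (set xs \<rightarrow>\<^sub>E B)). prod_list (map (\<lambda>y. F y (g y)) (x # xs)))"
    by (subst sum.reindex[OF inj_combinator[OF x]]) (simp add: case_prod_unfold)
  also have "\<dots> = (\<Sum>g\<in>set (x # xs) \<rightarrow>\<^sub>E B. prod_list (map (\<lambda>y. F y (g y)) (x # xs)))"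
    by (simp add: PiE_insert_eq)
  finally show ?case .
qed

lemma prod_list_map_mult_central:
  fixes c w :: "'i \<Rightarrow> 'a::ring_1"
  assumes "\<And>x. x \<in> set xs \<Longrightarrow> c x \<in> center"
  shows "prod_list (map (\<lambda>x. c x * w x) xs) = prod_list (map c xs) * prod_list (map w xs)"
  using assms
proof (induction xs)
  case (Cons x xs)
  have "prod_list (map c xs) \<in> center"
    using Cons.prems by (intro center_prod_list) auto
  then have "w x * prod_list (map c xs) = prod_list (map c xs) * w x"
    by (simp add: centerD)
  then show ?case
    using Cons by (simp add: mult.assoc) (metis mult.assoc)
qed simp

lemma prod_list_map_central_perm:
  fixes c :: "'i \<Rightarrow> 'a::ring_1"
  assumes "mset xs = mset ys" "\<And>x. x \<in> set xs \<Longrightarrow> c x \<in> center"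
  shows "prod_list (map c xs) = prod_list (map c ys)"
  using assms
proof (induction xs arbitrary: ys)
  case (Cons x xs)
  then obtain ys1 ys2 where ys: "ys = ys1 @ x # ys2"
    by (metis list.set_intros(1) set_mset_mset split_list)
  have "prod_list (map c ys) = prod_list (map c ys1) * c x * prod_list (map c ys2)"
    using ys by (simp add: mult.assoc)
  also have "\<dots> = c x * prod_list (map c (ys1 @ ys2))"
    using centerD[of "c x"] Cons.prems(2) by (simp add: mult.assoc)
  also have "prod_list (map c (ys1 @ ys2)) = prod_list (map c xs)"
    using Cons.IH[of "ys1 @ ys2"] Cons.prems ys by simp
  finally show ?case by simp
qed simp

section \<open>The standard polynomial\<close>

definition standard_eval :: "nat \<Rightarrow> (nat \<Rightarrow> 'a::ring_1) \<Rightarrow> 'a" where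
  "standard_eval n r =
    (\<Sum>\<sigma> | \<sigma> permutes {0..<n}. of_int (sign \<sigma>) * prod_list (map (\<lambda>j. r (\<sigma> j)) [0..<n]))"

text \<open>Pairing sigma with the transposition of two indices where r agrees cancels the sum without
  dividing by 2, so this holds in every characteristic.\<close>
lemma standard_eval_eq_0_if_not_inj:
  assumes "\<not> inj_on r {0..<n}"
  shows "standard_eval n r = 0"
proof -
  obtain a b where ab: "a < n" "b < n" "a \<noteq> b" "r a = r b"
    using assms unfolding inj_on_def by auto
  define \<tau> where "\<tau> = transpose a b"
  have \<tau>: "\<tau> permutes {0..<n}" "sign \<tau> = -1" "r \<circ> \<tau> = r"
    using ab unfolding \<tau>_def by (auto intro: permutes_swap_id simp: sign_swap_id transpose_def)
  show ?thesis
    unfolding standard_eval_def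
  proof (rule sum_involution_eq_0[where h = "\<lambda>\<sigma>. \<tau> \<circ> \<sigma>"], simp_all)
    fix \<sigma> assume \<sigma>: "\<sigma> permutes {0..<n}"
    have "permutation \<tau>" "permutation \<sigma>"
      using \<tau>(1) \<sigma> by (auto simp: permutation_permutes)
    then have "sign (\<tau> \<circ> \<sigma>) = - sign \<sigma>"
      using \<tau>(2) by (simp add: sign_compose)
    moreover have "r (\<tau> (\<sigma> j)) = r (\<sigma> j)" for j
      using \<tau>(3) by (metis comp_apply)
    ultimately show "of_int (sign (\<tau> \<circ> \<sigma>)) * prod_list (map (\<lambda>j. r (\<tau> (\<sigma> j))) [0..<n]) +
        of_int (sign \<sigma>) * prod_list (map (\<lambda>j. r (\<sigma> j)) [0..<n]) = 0"
      by simp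
    show "\<tau> \<circ> \<sigma> permutes {0..<n}"
      using \<sigma> \<tau>(1) by (rule permutes_compose)
    show "\<tau> \<circ> (\<tau> \<circ> \<sigma>) = \<sigma>"
      unfolding \<tau>_def by (simp add: comp_assoc[symmetric])
    obtain j where "\<sigma> j = a"
      using permutes_surj[OF \<sigma>] by (metis UNIV_I imageE)
    then show "\<tau> \<circ> \<sigma> \<noteq> \<sigma>"
      using ab(3) unfolding \<tau>_def by (metis comp_apply transpose_apply_first)
  qed
qed

lemma prod_list_permuted_central_expand:
  fixes c :: "nat \<Rightarrow> 'a \<Rightarrow> 'a::ring_1"
  assumes \<sigma>: "\<sigma> permutes {0..<n}"
    and c: "\<And>i b. c i b \<in> center" and r: "\<And>i. r i = (\<Sum>b\<in>B. c i b * b)"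
  shows "prod_list (map (\<lambda>j. r (\<sigma> j)) [0..<n]) = (\<Sum>g\<in>{0..<n} \<rightarrow>\<^sub>E B.
    prod_list (map (\<lambda>i. c i (g i)) [0..<n]) * prod_list (map (\<lambda>j. g (\<sigma> j)) [0..<n]))"
proof -
  have d: "distinct (map \<sigma> [0..<n])" and st: "set (map \<sigma> [0..<n]) = {0..<n}"
    using permutes_inj_on[OF \<sigma>] permutes_image[OF \<sigma>] by (simp_all add: distinct_map)
  then have ms: "mset (map \<sigma> [0..<n]) = mset [0..<n]"
    by (metis distinct_upt set_upt set_eq_iff_mset_eq_distinct)
  have "prod_list (map (\<lambda>j. r (\<sigma> j)) [0..<n]) =
      (\<Sum>g\<in>{0..<n} \<rightarrow>\<^sub>E B. prod_list (map (\<lambda>x. c x (g x) * g x) (map \<sigma> [0..<n])))"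
    using prod_list_map_sum[OF d, of "\<lambda>x b. c x b * b" B] st by (simp add: r o_def)
  also have "\<dots> = (\<Sum>g\<in>{0..<n} \<rightarrow>\<^sub>E B.
      prod_list (map (\<lambda>i. c i (g i)) [0..<n]) * prod_list (map (\<lambda>j. g (\<sigma> j)) [0..<n]))"
  proof (rule sum.cong[OF refl])
    fix g
    have "prod_list (map (\<lambda>x. c x (g x) * g x) (map \<sigma> [0..<n])) =
        prod_list (map (\<lambda>x. c x (g x)) (map \<sigma> [0..<n])) * prod_list (map g (map \<sigma> [0..<n]))"
      using c by (intro prod_list_map_mult_central)
    also have "prod_list (map (\<lambda>x. c x (g x)) (map \<sigma> [0..<n])) = prod_list (map (\<lambda>i. c i (g i)) [0..<n])"
      using c ms by (intro prod_list_map_central_perm)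
    finally show "prod_list (map (\<lambda>x. c x (g x) * g x) (map \<sigma> [0..<n])) =
        prod_list (map (\<lambda>i. c i (g i)) [0..<n]) * prod_list (map (\<lambda>j. g (\<sigma> j)) [0..<n])"
      by (simp add: o_def)
  qed
  finally show ?thesis .
qed

lemma standard_eval_central_expand:
  assumes c: "\<And>i b. c i b \<in> center" and r: "\<And>i. r i = (\<Sum>b\<in>B. c i b * b)"
  shows "standard_eval n r =
    (\<Sum>g\<in>{0..<n} \<rightarrow>\<^sub>E B. prod_list (map (\<lambda>i. c i (g i)) [0..<n]) * standard_eval n g)"
proof -
  let ?C = "\<lambda>g. prod_list (map (\<lambda>i. c i (g i)) [0..<n])"
  let ?P = "\<lambda>\<sigma> g. prod_list (map (\<lambda>j. g (\<sigma> j)) [0..<n])"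
  have "standard_eval n r = (\<Sum>\<sigma> | \<sigma> permutes {0..<n}. \<Sum>g\<in>{0..<n} \<rightarrow>\<^sub>E B.
      ?C g * (of_int (sign \<sigma>) * ?P \<sigma> g))"
    unfolding standard_eval_def
  proof (rule sum.cong[OF refl])
    fix \<sigma> assume "\<sigma> \<in> {\<sigma>. \<sigma> permutes {0..<n}}"
    then have "?P \<sigma> r = (\<Sum>g\<in>{0..<n} \<rightarrow>\<^sub>E B. ?C g * ?P \<sigma> g)"
      by (intro prod_list_permuted_central_expand[OF _ c r]) simp
    moreover have "of_int (sign \<sigma>) * (?C g * ?P \<sigma> g) = ?C g * (of_int (sign \<sigma>) * ?P \<sigma> g)" for g
      by (metis mult.assoc mult_of_int_commute)
    ultimately show "of_int (sign \<sigma>) * ?P \<sigma> r = (\<Sum>g\<in>{0..<n} \<rightarrow>\<^sub>E B. ?C g * (of_int (sign \<sigma>) * ?P \<sigma> g))"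
      by (simp add: sum_distrib_left)
  qed
  also have "\<dots> = (\<Sum>g\<in>{0..<n} \<rightarrow>\<^sub>E B. ?C g * standard_eval n g)"
    unfolding standard_eval_def by (subst sum.swap) (simp add: sum_distrib_left)
  finally show ?thesis .
qed

definition standard_poly :: "nat \<Rightarrow> nat list \<Rightarrow> int" where
  "standard_poly n w = (\<Sum>\<sigma> | \<sigma> permutes {0..<n} \<and> map \<sigma> [0..<n] = w. sign \<sigma>)"

lemma inj_on_permutation_word: "inj_on (\<lambda>\<sigma>. map \<sigma> [0..<n]) {\<sigma>. \<sigma> permutes {0..<n}}"
proof (rule inj_onI, rule ext)
  fix \<sigma> \<tau> x
  assume "\<sigma> \<in> {\<sigma>. \<sigma> permutes {0..<n}}" "\<tau> \<in> {\<sigma>. \<sigma> permutes {0..<n}}"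
    and "map \<sigma> [0..<n] = map \<tau> [0..<n]"
  then show "\<sigma> x = \<tau> x"
    by (cases "x < n") (auto simp: permutes_not_in)
qed

lemma standard_poly_permutation_word:
  assumes "\<sigma> permutes {0..<n}"
  shows "standard_poly n (map \<sigma> [0..<n]) = sign \<sigma>"
proof -
  have "{\<tau>. \<tau> permutes {0..<n} \<and> map \<tau> [0..<n] = map \<sigma> [0..<n]} = {\<sigma>}"
    using assms inj_on_permutation_word[of n] unfolding inj_on_def by blast
  then show ?thesis unfolding standard_poly_def by simp
qed

lemma support_standard_poly:
  "{w. standard_poly n w \<noteq> 0} = (\<lambda>\<sigma>. map \<sigma> [0..<n]) ` {\<sigma>. \<sigma> permutes {0..<n}}"
proof
  show "{w. standard_poly n w \<noteq> 0} \<subseteq> (\<lambda>\<sigma>. map \<sigma> [0..<n]) ` {\<sigma>. \<sigma> permutes {0..<n}}"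
    unfolding standard_poly_def by (auto elim: sum.not_neutral_contains_not_neutral)
  show "(\<lambda>\<sigma>. map \<sigma> [0..<n]) ` {\<sigma>. \<sigma> permutes {0..<n}} \<subseteq> {w. standard_poly n w \<noteq> 0}"
    using standard_poly_permutation_word by (auto simp: sign_def split: if_splits)
qed

lemma nc_eval_standard_poly: "nc_eval (standard_poly n) r = standard_eval n r"
proof -
  have "nc_eval (standard_poly n) r = (\<Sum>\<sigma> | \<sigma> permutes {0..<n}.
      of_int (standard_poly n (map \<sigma> [0..<n])) * prod_list (map r (map \<sigma> [0..<n])))"
    unfolding nc_eval_def support_standard_poly
    by (rule sum.reindex[OF inj_on_permutation_word, unfolded o_def])
  then show ?thesis
    unfolding standard_eval_def by (simp add: standard_poly_permutation_word o_def)
qed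

text \<open>By multilinearity over the centre it suffices to evaluate s_(d+1) at elements of B, and
  two of these must coincide.\<close>
theorem PI_ring_if_finite_central_span:
  fixes B :: "'a::ring_1 set"
  assumes B: "finite B" and span: "central_span B = UNIV"
  shows "PI_ring (UNIV :: 'a set)"
  unfolding PI_ring_def
proof (intro exI[of _ "standard_poly (Suc (card B))"] conjI allI impI)
  define n where "n = Suc (card B)"
  show "finite {w. standard_poly (Suc (card B)) w \<noteq> 0}"
    unfolding support_standard_poly by (simp add: finite_permutations)
  show "\<exists>w. standard_poly (Suc (card B)) w = 1"
    using standard_poly_permutation_word[OF permutes_id] by auto
  fix r :: "nat \<Rightarrow> 'a"
  have "\<exists>c. (\<forall>b. c b \<in> center) \<and> r i = (\<Sum>b\<in>B. c b * b)" for i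
    using central_spanE[of "r i" B] span by blast
  then obtain c where c: "\<And>i. \<forall>b. c i b \<in> center" "\<And>i. r i = (\<Sum>b\<in>B. c i b * b)"
    by metis
  have "standard_eval n g = 0" if "g \<in> {0..<n} \<rightarrow>\<^sub>E B" for g
  proof (rule standard_eval_eq_0_if_not_inj, rule notI)
    assume "inj_on g {0..<n}"
    then have "card {0..<n} \<le> card B"
      using that B by (intro card_inj_on_le) auto
    then show False unfolding n_def by simp
  qed
  then have "standard_eval n r = 0"
    unfolding standard_eval_central_expand[of c r B, OF c[rule_format]] by simp
  then show "nc_eval (standard_poly (Suc (card B))) r = 0"
    by (simp add: nc_eval_standard_poly n_def)
qed

lemma PI_ring_subset: "PI_ring A \<Longrightarrow> R \<subseteq> A \<Longrightarrow> PI_ring R"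
  unfolding PI_ring_def by blast

section \<open>Quantum tori at roots of unity\<close>

lemma Aring_subset_Kfield: "Aring z \<subseteq> Kfield z"
proof
  fix x assume "x \<in> Aring z"
  then obtain p :: "int poly" where x: "x = poly (map_poly of_int p) z"
    unfolding Aring_def by blast
  show "x \<in> Kfield z"
    unfolding Kfield_def
  proof (rule InterI)
    fix S assume "S \<in> {S. z \<in> S \<and> 0 \<in> S \<and> 1 \<in> S \<and>
      (\<forall>a\<in>S. \<forall>b\<in>S. a + b \<in> S \<and> a - b \<in> S \<and> a * b \<in> S) \<and> (\<forall>a\<in>S. inverse a \<in> S)}"
    then have S: "z \<in> S" "0 \<in> S" "1 \<in> S"
      and closed: "\<And>a b. a \<in> S \<Longrightarrow> b \<in> S \<Longrightarrow> a + b \<in> S \<and> a - b \<in> S \<and> a * b \<in> S"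
      by auto
    have "of_nat n \<in> S" for n
      by (induction n) (use S closed in auto)
    then have "of_int k \<in> S" for k
      using closed[OF S(2)] by (cases k rule: int_cases) (auto simp del: of_nat_Suc)
    then show "x \<in> S"
      unfolding x by (induction p rule: pCons_induct) (auto simp: map_poly_pCons S closed)
  qed
qed

lemma Aring_power: "z ^ n \<in> Aring z"
  unfolding Aring_def
  by (rule CollectI, rule exI[of _ "monom 1 n"]) (simp add: map_poly_monom poly_monom)

lemma Aring_0: "0 \<in> Aring z"
  unfolding Aring_def by (rule CollectI, rule exI[of _ 0]) simp

lemma emb_in_center:
  assumes "division_algebra_over z emb" "a \<in> Aring z"
  shows "emb a \<in> center"
  using assms Aring_subset_Kfield unfolding division_algebra_over_def center_def by blast

lemma subring_gen_alg:
  assumes "division_algebra_over z emb"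
  shows "subring (gen_alg z emb S)"
  unfolding subring_def
proof
  have "emb 1 = 1" "1 \<in> Aring z"
    using assms Aring_power[of z 0] unfolding division_algebra_over_def by simp_all
  then show "1 \<in> gen_alg z emb S"
    unfolding gen_alg_def by (metis (mono_tags, lifting) InterI mem_Collect_eq)
  show "\<forall>a\<in>gen_alg z emb S. \<forall>b\<in>gen_alg z emb S.
      a + b \<in> gen_alg z emb S \<and> - a \<in> gen_alg z emb S \<and> a * b \<in> gen_alg z emb S"
    unfolding gen_alg_def by blast
qed

lemma ZN_add: "f \<in> ZN N \<Longrightarrow> g \<in> ZN N \<Longrightarrow> (\<lambda>i. f i + g i) \<in> ZN N"
  by (simp add: ZN_def) (metis add.right_neutral)

lemma ZN_scale: "f \<in> ZN N \<Longrightarrow> (\<lambda>i. k * f i) \<in> ZN N"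
  by (simp add: ZN_def)

lemma Xb_in_Tset: "f \<in> ZN N \<Longrightarrow> Xb f \<in> Tset z N"
  using Aring_0 Aring_power[of z 0] unfolding Tset_def by (auto simp: Xb_def)

lemma tscal_Xb_in_Tset: "a \<in> Aring z \<Longrightarrow> f \<in> ZN N \<Longrightarrow> tscal a (Xb f) \<in> Tset z N"
  using Aring_0 unfolding Tset_def tscal_def by (auto simp: Xb_def)

lemma restrict_in_Tset:
  "finite S \<Longrightarrow> S \<subseteq> ZN N \<Longrightarrow> (\<And>f. c f \<in> Aring z) \<Longrightarrow>
    (\<lambda>h. if h \<in> S then c h else 0) \<in> Tset z N"
  using Aring_0 unfolding Tset_def by (auto elim: finite_subset[rotated])

lemma tmul_Xb:
  "tmul l z N lam (Xb f) (Xb g) = tscal (epsh l z (bil N lam f g)) (Xb (\<lambda>i. f i + g i))"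
proof
  fix h
  have "(\<lambda>i. h i - f i) = g \<longleftrightarrow> h = (\<lambda>i. f i + g i)"
    by (auto simp: fun_eq_iff algebra_simps)
  moreover have "{g. Xb f g \<noteq> 0} = {f}" by (auto simp: Xb_def)
  ultimately show
    "tmul l z N lam (Xb f) (Xb g) h = tscal (epsh l z (bil N lam f g)) (Xb (\<lambda>i. f i + g i)) h"
    unfolding tmul_def tscal_def by (auto simp: Xb_def)
qed

lemma epsh_l_multiple: "epsh l z (int l * k) = 1"
  unfolding epsh_def by simp

lemma bil_scale_left: "bil N lam (\<lambda>i. k * f i) g = k * bil N lam f g"
  unfolding bil_def by (simp add: sum_distrib_left mult.assoc)

lemma bil_scale_right: "bil N lam f (\<lambda>i. k * g i) = k * bil N lam f g"
  unfolding bil_def by (simp add: sum_distrib_left mult.assoc mult.left_commute)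

definition residue_box :: "nat \<Rightarrow> nat \<Rightarrow> (nat \<Rightarrow> int) set" where
  "residue_box l N = {u \<in> ZN N. \<forall>i. 0 \<le> u i \<and> u i < int l}"

lemma finite_residue_box: "finite (residue_box l N)"
proof (rule finite_subset)
  show "residue_box l N \<subseteq> {f. \<forall>i. (i \<in> {1..N} \<longrightarrow> f i \<in> {0..<int l}) \<and> (i \<notin> {1..N} \<longrightarrow> f i = 0)}"
    unfolding residue_box_def ZN_def by auto
  show "finite {f. \<forall>i. (i \<in> {1..N} \<longrightarrow> f i \<in> {0..<int l}) \<and> (i \<notin> {1..N} \<longrightarrow> f i = (0::int))}"
    by (rule finite_set_of_finite_funs) auto
qed

text \<open>What is used of a toric frame M with matrix lam: phi maps the quantum torus into F,
  X^f to M f, and F is the skew field generated by its image.\<close>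
locale toric_frame_embedding =
  fixes l N :: nat and z :: complex and emb :: "complex \<Rightarrow> 'f::division_ring"
    and lam :: "nat \<Rightarrow> nat \<Rightarrow> int" and \<phi> :: "((nat \<Rightarrow> int) \<Rightarrow> complex) \<Rightarrow> 'f"
    and M :: "(nat \<Rightarrow> int) \<Rightarrow> 'f"
  assumes l_pos: "0 < l"
    and division_algebra: "division_algebra_over z emb"
    and \<phi>_add: "\<And>c d. c \<in> Tset z N \<Longrightarrow> d \<in> Tset z N \<Longrightarrow> \<phi> (tadd c d) = \<phi> c + \<phi> d"
    and \<phi>_mult: "\<And>c d. c \<in> Tset z N \<Longrightarrow> d \<in> Tset z N \<Longrightarrow> \<phi> (tmul l z N lam c d) = \<phi> c * \<phi> d"
    and \<phi>_scale: "\<And>a c. a \<in> Aring z \<Longrightarrow> c \<in> Tset z N \<Longrightarrow> \<phi> (tscal a c) = emb a * \<phi> c"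
    and \<phi>_one: "\<phi> (Xb (\<lambda>_. 0)) = 1"
    and \<phi>_Xb: "\<And>f. f \<in> ZN N \<Longrightarrow> \<phi> (Xb f) = M f"
    and divsub_image: "divsub (\<phi> ` Tset z N) = UNIV"
begin

lemma M_mult:
  assumes "f \<in> ZN N" "g \<in> ZN N"
  shows "M f * M g = emb (epsh l z (bil N lam f g)) * M (\<lambda>i. f i + g i)"
proof -
  have fg: "(\<lambda>i. f i + g i) \<in> ZN N" using assms by (rule ZN_add)
  have "M f * M g = \<phi> (Xb f) * \<phi> (Xb g)"
    using assms by (simp add: \<phi>_Xb)
  also have "\<dots> = \<phi> (tscal (epsh l z (bil N lam f g)) (Xb (\<lambda>i. f i + g i)))"
    using \<phi>_mult[OF Xb_in_Tset[OF assms(1)] Xb_in_Tset[OF assms(2)]] by (simp only: tmul_Xb)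
  also have "\<dots> = emb (epsh l z (bil N lam f g)) * M (\<lambda>i. f i + g i)"
    using \<phi>_scale[OF _ Xb_in_Tset[OF fg]] \<phi>_Xb[OF fg] by (simp add: epsh_def Aring_power)
  finally show ?thesis .
qed

lemma emb_1: "emb 1 = 1"
  using division_algebra unfolding division_algebra_over_def by simp

lemma M_l_multiple_mult:
  assumes "q \<in> ZN N" "g \<in> ZN N"
  shows "M (\<lambda>i. int l * q i) * M g = M (\<lambda>i. int l * q i + g i)"
    and "M g * M (\<lambda>i. int l * q i) = M (\<lambda>i. int l * q i + g i)"
  using M_mult[OF ZN_scale[OF assms(1)] assms(2)] M_mult[OF assms(2) ZN_scale[OF assms(1)]]
  by (simp_all add: bil_scale_left bil_scale_right epsh_l_multiple emb_1 add.commute)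

lemma \<phi>_eq_sum:
  assumes "c \<in> Tset z N"
  shows "\<phi> c = (\<Sum>f | c f \<noteq> 0. emb (c f) * M f)"
proof -
  have restrict: "\<phi> (\<lambda>h. if h \<in> S then c h else 0) = (\<Sum>f\<in>S. emb (c f) * M f)"
    if "finite S" "S \<subseteq> ZN N" for S
    using that
  proof (induction S rule: finite_induct)
    case empty
    have zero: "(\<lambda>_. 0) \<in> Tset z N"
      using Aring_0 unfolding Tset_def by simp
    have "\<phi> (\<lambda>_. 0) = \<phi> (\<lambda>_. 0) + \<phi> (\<lambda>_. 0)"
      using \<phi>_add[OF zero zero] by (simp add: tadd_def)
    then show ?case by simp
  next
    case (insert f S)
    have c: "\<And>f. c f \<in> Aring z" using assms unfolding Tset_def by blast
    have "(\<lambda>h. if h \<in> insert f S then c h else 0) =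
        tadd (tscal (c f) (Xb f)) (\<lambda>h. if h \<in> S then c h else 0)"
      using insert.hyps(2) by (auto simp: tadd_def tscal_def Xb_def)
    then show ?case
      using insert c \<phi>_add[OF tscal_Xb_in_Tset restrict_in_Tset] \<phi>_scale[OF _ Xb_in_Tset] \<phi>_Xb
      by simp
  qed
  have "c = (\<lambda>h. if h \<in> {f. c f \<noteq> 0} then c h else 0)" by auto
  then show ?thesis
    using restrict[of "{f. c f \<noteq> 0}"] assms unfolding Tset_def by auto
qed

lemma division_subring_eq_UNIV:
  assumes "division_subring D" and "\<And>a f. a \<in> Aring z \<Longrightarrow> f \<in> ZN N \<Longrightarrow> emb a * M f \<in> D"
  shows "D = UNIV"
proof -
  have "\<phi> ` Tset z N \<subseteq> D"
  proof
    fix y assume "y \<in> \<phi> ` Tset z N"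
    then obtain c where c: "c \<in> Tset z N" "y = \<phi> c" by blast
    then show "y \<in> D"
      using \<phi>_eq_sum[OF c(1)] assms unfolding Tset_def by (auto intro!: division_subring_sum)
  qed
  then show ?thesis
    using divsub_subset[OF _ assms(1)] divsub_image by blast
qed

lemma M_l_multiple_central:
  assumes "q \<in> ZN N"
  shows "M (\<lambda>i. int l * q i) \<in> center"
proof -
  let ?x = "M (\<lambda>i. int l * q i)"
  have "{y. ?x * y = y * ?x} = UNIV"
  proof (rule division_subring_eq_UNIV[OF division_subring_centralizer], clarify)
    fix a f assume "a \<in> Aring z" "f \<in> ZN N"
    then have "emb a \<in> center" using emb_in_center[OF division_algebra] by blast
    then show "?x * (emb a * M f) = emb a * M f * ?x"
      using M_l_multiple_mult[OF assms \<open>f \<in> ZN N\<close>]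
      by (metis centerD mult.assoc)
  qed
  then show ?thesis by (auto intro: centerI)
qed

text \<open>Division with remainder f = l q + u, with every u i in [0, l), splits M f into a central
  factor and a monomial from the residue box.\<close>
lemma M_in_central_span:
  assumes f: "f \<in> ZN N"
  shows "M f \<in> central_span (M ` residue_box l N)"
proof -
  define q where "q i = f i div int l" for i
  define u where "u i = f i mod int l" for i
  have q: "q \<in> ZN N" and u: "u \<in> ZN N"
    using f unfolding q_def u_def ZN_def by (simp_all, metis div_0, metis mod_0)
  have "u \<in> residue_box l N"
    using u l_pos unfolding residue_box_def u_def by simp
  have "M f = M (\<lambda>i. int l * q i) * M u"
    using M_l_multiple_mult(1)[OF q u] unfolding q_def u_def by (simp add: mult_div_mod_eq)
  then show ?thesis
    using M_l_multiple_central[OF q] \<open>u \<in> residue_box l N\<close> finite_residue_box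
    by (simp add: central_span_scale central_span_base)
qed

lemma central_span_residue_box: "central_span (M ` residue_box l N) = UNIV"
proof (rule division_subring_eq_UNIV)
  show "division_subring (central_span (M ` residue_box l N))"
  proof (rule division_subring_central_span)
    show "finite (M ` residue_box l N)" using finite_residue_box by simp
    have "M (\<lambda>_. 0) = 1"
      using \<phi>_one \<phi>_Xb[of "\<lambda>_. 0"] by (simp add: ZN_def)
    then show "1 \<in> central_span (M ` residue_box l N)"
      using M_in_central_span[of "\<lambda>_. 0"] by (simp add: ZN_def)
    fix b b' assume "b \<in> M ` residue_box l N" "b' \<in> M ` residue_box l N"
    then obtain u v where "u \<in> ZN N" "v \<in> ZN N" "b = M u" "b' = M v"
      unfolding residue_box_def by auto
    then show "b * b' \<in> central_span (M ` residue_box l N)"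
      using M_mult emb_in_center[OF division_algebra Aring_power] M_in_central_span[OF ZN_add]
      by (simp add: epsh_def central_span_scale)
  qed
  show "emb a * M f \<in> central_span (M ` residue_box l N)" if "a \<in> Aring z" "f \<in> ZN N" for a f
    using emb_in_center[OF division_algebra that(1)] M_in_central_span[OF that(2)]
    by (rule central_span_scale)
qed

end

lemma toric_frame_embedding_exists:
  assumes "0 < l" "division_algebra_over z emb" "toric_frame_with l z emb N lam M"
  obtains \<phi> where "toric_frame_embedding l N z emb lam \<phi> M"
proof -
  from assms(3) obtain \<phi> where
    "\<forall>c\<in>Tset z N. \<forall>d\<in>Tset z N. \<phi> (tadd c d) = \<phi> c + \<phi> d"
    "\<forall>c\<in>Tset z N. \<forall>d\<in>Tset z N. \<phi> (tmul l z N lam c d) = \<phi> c * \<phi> d"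
    "\<forall>a\<in>Aring z. \<forall>c\<in>Tset z N. \<phi> (tscal a c) = emb a * \<phi> c"
    "\<phi> (Xb (\<lambda>_. 0)) = 1" "\<forall>f\<in>ZN N. \<phi> (Xb f) = M f" "divsub (\<phi> ` Tset z N) = UNIV"
    unfolding toric_frame_with_def by blast
  then show ?thesis
    using assms(1,2) by (intro that) (unfold_locales, auto)
qed

theorem theorem3p11:
  fixes l N :: nat and z :: complex and emb :: "complex \<Rightarrow> 'f::division_ring"
    and ex invs :: "nat set"
    and M :: "(nat \<Rightarrow> int) \<Rightarrow> 'f" and B :: "nat \<Rightarrow> nat \<Rightarrow> int"
  assumes "primitive_root l z"
    and "division_algebra_over z emb"
    and "ex \<subseteq> {1..N}"
    and "invs \<subseteq> {1..N} - ex"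
    and "quantum_seed l z emb N ex M B"
  shows "PI_domain (cluster_alg l z emb N ex M B invs) \<and>
         PI_domain (upper_cluster_alg l z emb N ex M B invs)"
proof -
  obtain lam where lam: "toric_frame_with l z emb N lam M"
    using assms(5) unfolding quantum_seed_def by blast
  have "0 < l" using assms(1) unfolding primitive_root_def by blast
  then obtain \<phi> where "toric_frame_embedding l N z emb lam \<phi> M"
    using toric_frame_embedding_exists assms(2) lam by blast
  then have "central_span (M ` residue_box l N) = UNIV"
    by (rule toric_frame_embedding.central_span_residue_box)
  then have "PI_ring (UNIV :: 'f set)"
    by (rule PI_ring_if_finite_central_span[OF finite_imageI[OF finite_residue_box]])
  moreover have "domain_set (cluster_alg l z emb N ex M B invs)"
    unfolding cluster_alg_def using assms(2) by (intro domain_set_if_subring subring_gen_alg)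
  moreover have "domain_set (upper_cluster_alg l z emb N ex M B invs)"
    unfolding upper_cluster_alg_def using assms(2)
    by (intro domain_set_if_subring subring_Inter) (auto intro: subring_gen_alg)
  ultimately show ?thesis
    unfolding PI_domain_def using PI_ring_subset by blast
qed

end
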